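(* Let $\alpha\in(0,1)$, let $\ell\ge1/\alpha$ be an integer with $\alpha\ell\in\mathbb N$, and let $n\ge\ell$. Let $C=C_{n,\ell,\alpha}$, $\pi$ the uniform distribution on $[n]^\ell$ and $L=I-C$. For every positive integer $r\le\ell/2$, there is a degree-2 sum-of-squares proof, in the formal variables $(F(X))_{X\in[n]^\ell}$ and from the axioms $\{0\le F(X)\le1\}_{X}\cup\mathcal{A}_{inv}$, of $$\langle F,LF\rangle_\pi\ \ge\ \big(1-(1-\alpha)^{r+1}\big)\Big[\mathbb{E}_\pi[F]-8^r\binom{\ell}{r}\sum_{j=0}^r\mathbb{E}_{Y\in[n]^j}\big[\delta_Y(F)^2\big]+\mathbb{E}_\pi[F^2-F]\Big].$$ In particular this holds for every permutation-invariant $F:[n]^\ell\to[0,1]$.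
   Context: Johnson-approximating graph $C_{n,\ell,\alpha}$ (for $\alpha\in(0,1)$, $\alpha\ell\in\mathbb N$, $n>\ell$): vertex set $[n]^\ell=(\mathbb Z/n\mathbb Z)^\ell$; a random neighbor of $X=(x_1,\dots,x_\ell)$ is $(x_1+b_1y_1,\dots,x_\ell+b_\ell y_\ell)$ where $y$ is uniform in $[n]^\ell$ and $b$ is uniform among vectors in $\{0,1\}^\ell$ of Hamming weight $\alpha\ell$; $C$ also denotes the corresponding transition (normalized adjacency) matrix. $\langle f,g\rangle_\pi=\mathbb{E}_{X\sim\pi}f(X)g(X)$. $F$ is permutation-invariant if $F(x_1,\dots,x_\ell)=F(x_{\sigma(1)},\dots,x_{\sigma(\ell)})$ for all $\sigma\in S_\ell$; $\mathcal{A}_{inv}$ is the set of these equalities. For $Y\in[n]^j$ ($0\le j\le\ell-1$), the restriction $F|_Y:[n]^{\ell-j}\to\mathbb R$ is $F|_Y(x)=F(Y,x)$ and $\delta_Y(F)=\mathbb{E}_{x\in[n]^{\ell-j}}F|_Y(x)$; for $j=0$, $\delta_\emptyset(F)=\mathbb{E}_\pi[F]$. A degree-$d$ SoS proof from axioms means the difference is a sum of squares plus combinations of the inequality axioms with SoS multipliers and of the equality axioms with arbitrary multipliers, all of degree $\le d$. *)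

theory Defs
  imports "HOL-Analysis.Analysis" "HOL-Combinatorics.Permutations"
begin

text \<open>Tuples in [n]^m = (Z/nZ)^m are represented as lists of length m with entries in {0..<n}.\<close>
definition tuples :: "nat \<Rightarrow> nat \<Rightarrow> nat list set" where
  "tuples n m = {xs. length xs = m \<and> set xs \<subseteq> {..<n}}"

definition avg :: "nat \<Rightarrow> nat \<Rightarrow> (nat list \<Rightarrow> real) \<Rightarrow> real" where
  "avg n m f = (\<Sum>X\<in>tuples n m. f X) / real (card (tuples n m))"

text \<open>Supports of the vectors b in {0,1}^l of Hamming weight alpha*l.\<close>
definition weight_sets :: "real \<Rightarrow> nat \<Rightarrow> nat set set" where
  "weight_sets \<alpha> l = {S. S \<subseteq> {..<l} \<and> real (card S) = \<alpha> * real l}"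

text \<open>The neighbour (x_i + b_i y_i)_i, with b the indicator of S.\<close>
definition shift :: "nat \<Rightarrow> nat \<Rightarrow> nat set \<Rightarrow> nat list \<Rightarrow> nat list \<Rightarrow> nat list" where
  "shift n l S X Y = map (\<lambda>i. if i \<in> S then (X ! i + Y ! i) mod n else X ! i) [0..<l]"

definition Cop :: "nat \<Rightarrow> nat \<Rightarrow> real \<Rightarrow> (nat list \<Rightarrow> real) \<Rightarrow> nat list \<Rightarrow> real" where
  "Cop n l \<alpha> F X =
     (\<Sum>S\<in>weight_sets \<alpha> l. \<Sum>Y\<in>tuples n l. F (shift n l S X Y))
       / (real (card (weight_sets \<alpha> l)) * real (card (tuples n l)))"

definition dirichlet :: "nat \<Rightarrow> nat \<Rightarrow> real \<Rightarrow> (nat list \<Rightarrow> real) \<Rightarrow> real" where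
  "dirichlet n l \<alpha> F = avg n l (\<lambda>X. F X * (F X - Cop n l \<alpha> F X))"

definition delta :: "nat \<Rightarrow> nat \<Rightarrow> (nat list \<Rightarrow> real) \<Rightarrow> nat list \<Rightarrow> real" where
  "delta n l F Y = avg n (l - length Y) (\<lambda>x. F (Y @ x))"

definition permute_tuple :: "nat \<Rightarrow> (nat \<Rightarrow> nat) \<Rightarrow> nat list \<Rightarrow> nat list" where
  "permute_tuple l \<sigma> X = map (\<lambda>i. X ! \<sigma> i) [0..<l]"

definition perm_invariant :: "nat \<Rightarrow> nat \<Rightarrow> (nat list \<Rightarrow> real) \<Rightarrow> bool" where
  "perm_invariant n l F \<longleftrightarrow>
     (\<forall>X\<in>tuples n l. \<forall>\<sigma>. \<sigma> permutes {..<l} \<longrightarrow> F X = F (permute_tuple l \<sigma> X))"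

text \<open>Degree-2 SoS proof of "P(F) >= 0" in the formal variables (F(X))_{X in [n]^l} from the
  axioms {0 <= F(X), F(X) <= 1}_X and A_inv:  P equals, as a polynomial (equivalently, as a
  function on all real assignments), a sum of squares of affine forms, plus nonnegative
  constant (degree-0 SoS) multiples of the degree-1 inequality axioms, plus affine (degree-1)
  multiples of the equality axioms F(X) - F(sigma X) = 0.\<close>
definition sos2_proof :: "nat \<Rightarrow> nat \<Rightarrow> ((nat list \<Rightarrow> real) \<Rightarrow> real) \<Rightarrow> bool" where
  "sos2_proof n l P \<longleftrightarrow>
    (\<exists>(m::nat) (a::nat \<Rightarrow> nat list \<Rightarrow> real) (c::nat \<Rightarrow> real)
        (lam::nat list \<Rightarrow> real) (mu::nat list \<Rightarrow> real)
        (q::nat list \<Rightarrow> (nat \<Rightarrow> nat) \<Rightarrow> nat list \<Rightarrow> real) (d::nat list \<Rightarrow> (nat \<Rightarrow> nat) \<Rightarrow> real).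
       (\<forall>X\<in>tuples n l. lam X \<ge> 0 \<and> mu X \<ge> 0) \<and>
       (\<forall>F::nat list \<Rightarrow> real.
          P F = (\<Sum>k<m. (c k + (\<Sum>Y\<in>tuples n l. a k Y * F Y))\<^sup>2)
              + (\<Sum>X\<in>tuples n l. lam X * F X + mu X * (1 - F X))
              + (\<Sum>X\<in>tuples n l. \<Sum>\<sigma>\<in>{\<sigma>. \<sigma> permutes {..<l}}.
                   (d X \<sigma> + (\<Sum>Y\<in>tuples n l. q X \<sigma> Y * F Y)) * (F X - F (permute_tuple l \<sigma> X)))))"

definition rhs_bound :: "nat \<Rightarrow> nat \<Rightarrow> real \<Rightarrow> nat \<Rightarrow> (nat list \<Rightarrow> real) \<Rightarrow> real" where
  "rhs_bound n l \<alpha> r F =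
     (1 - (1 - \<alpha>) ^ (r + 1)) *
     (avg n l F - 8 ^ r * real (l choose r) * (\<Sum>j=0..r. avg n j (\<lambda>Y. (delta n l F Y)\<^sup>2))
      + avg n l (\<lambda>X. (F X)\<^sup>2 - F X))"

end

theory Submission
  imports Defs
begin

text \<open>
  Write F = \<Sum>_U F_U (U \<subseteq> [l]) for the Efron--Stein decomposition of F. The components are
  orthogonal, C multiplies F_U by mu(U) = P[S \<inter> U = {}] \<le> (1 - \<alpha>)^|U|, and the average of
  delta_Y(F)^2 over Y \<in> [n]^j is the total weight of the F_U with U \<subseteq> [j]. Hence the difference of
  the two sides is a linear combination of the weights |F_U|^2, each a sum of squares of linear
  forms in F. Only weights with |U| \<le> r can have negative coefficients; modulo the symmetry axioms
  |F_U|^2 equals |F_V|^2 for V = [|U|], and after this replacement the coefficient of the weight of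
  [j] is at least (1 - (1 - \<alpha>)^(r+1)) (8^r binom(l, r) - binom(l, j)) \<ge> 0.
\<close>

section \<open>Tuples\<close>

lemma mem_tuples: "X \<in> tuples n l \<longleftrightarrow> length X = l \<and> (\<forall>i<l. X ! i < n)"
  unfolding tuples_def by (auto simp: in_set_conv_nth subset_iff)

lemma tuples_eq_lists: "tuples n l = {xs. set xs \<subseteq> {..<n} \<and> length xs = l}"
  unfolding tuples_def by auto

lemma finite_tuples [simp]: "finite (tuples n l)"
  using finite_lists_length_eq[of "{..<n}" l] by (simp add: tuples_eq_lists)

lemma card_tuples: "card (tuples n l) = n ^ l"
  using card_lists_length_eq[of "{..<n}" l] by (simp add: tuples_eq_lists)

lemma bij_betw_append_tuples:
  "j \<le> l \<Longrightarrow> bij_betw (\<lambda>(Y, x). Y @ x) (tuples n j \<times> tuples n (l - j)) (tuples n l)"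
  by (rule bij_betw_byWitness[where f'="\<lambda>Z. (take j Z, drop j Z)"]) (auto simp: mem_tuples nth_append)

lemma sum_tuples_append:
  assumes "j \<le> l"
  shows "(\<Sum>Z\<in>tuples n l. g Z) = (\<Sum>Y\<in>tuples n j. \<Sum>x\<in>tuples n (l - j). g (Y @ x))"
  by (simp add: sum.reindex_bij_betw[OF bij_betw_append_tuples[OF assms], symmetric]
      sum.cartesian_product case_prod_beta)

text \<open>Unnormalised: dot n l F G = n^l \<langle>F, G\<rangle>_\<pi>.\<close>

definition dot :: "nat \<Rightarrow> nat \<Rightarrow> (nat list \<Rightarrow> real) \<Rightarrow> (nat list \<Rightarrow> real) \<Rightarrow> real" where
  "dot n l F G = (\<Sum>X\<in>tuples n l. F X * G X)"

lemma dot_commute: "dot n l F G = dot n l G F"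
  unfolding dot_def by (simp add: mult.commute)

lemma dot_cong:
  "(\<And>X. X \<in> tuples n l \<Longrightarrow> F X = F' X) \<Longrightarrow> (\<And>X. X \<in> tuples n l \<Longrightarrow> G X = G' X) \<Longrightarrow>
   dot n l F G = dot n l F' G'"
  unfolding dot_def by (intro sum.cong) auto

lemma dot_sum_left: "dot n l (\<lambda>X. \<Sum>b\<in>B. c b * H b X) G = (\<Sum>b\<in>B. c b * dot n l (H b) G)"
  unfolding dot_def by (simp add: sum_distrib_left sum_distrib_right sum.swap[of _ B] mult.assoc)

lemma dot_sum_right: "dot n l G (\<lambda>X. \<Sum>b\<in>B. c b * H b X) = (\<Sum>b\<in>B. c b * dot n l G (H b))"
  using dot_sum_left[of n l c H B G] by (simp add: dot_commute)

section \<open>Resampling coordinates\<close>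

definition replace_on :: "nat \<Rightarrow> nat set \<Rightarrow> nat list \<Rightarrow> nat list \<Rightarrow> nat list" where
  "replace_on l A X Y = map (\<lambda>i. if i \<in> A then Y ! i else X ! i) [0..<l]"

text \<open>resample n l A F is the conditional expectation of F given the coordinates outside A.\<close>

definition resample :: "nat \<Rightarrow> nat \<Rightarrow> nat set \<Rightarrow> (nat list \<Rightarrow> real) \<Rightarrow> nat list \<Rightarrow> real" where
  "resample n l A F X = (\<Sum>Y\<in>tuples n l. F (replace_on l A X Y)) / real (card (tuples n l))"

lemma length_replace_on [simp]: "length (replace_on l A X Y) = l"
  by (simp add: replace_on_def)

lemma nth_replace_on [simp]: "i < l \<Longrightarrow> replace_on l A X Y ! i = (if i \<in> A then Y ! i else X ! i)"
  by (simp add: replace_on_def)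

lemma replace_on_in_tuples: "X \<in> tuples n l \<Longrightarrow> Y \<in> tuples n l \<Longrightarrow> replace_on l A X Y \<in> tuples n l"
  by (auto simp: mem_tuples)

lemma replace_on_swap_involution:
  "X \<in> tuples n l \<Longrightarrow> Y \<in> tuples n l \<Longrightarrow> replace_on l A (replace_on l A X Y) (replace_on l A Y X) = X"
  by (rule nth_equalityI) (auto simp: mem_tuples)

lemma replace_on_replace_on:
  "X \<in> tuples n l \<Longrightarrow> Y \<in> tuples n l \<Longrightarrow> Z \<in> tuples n l \<Longrightarrow>
   replace_on l B (replace_on l A X Y) Z = replace_on l (A \<union> B) X (replace_on l B Y Z)"
  by (rule nth_equalityI) auto

lemma sum_replace_on_swap:
  "(\<Sum>p\<in>tuples n l \<times> tuples n l. g p) =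
   (\<Sum>p\<in>tuples n l \<times> tuples n l. g (replace_on l A (fst p) (snd p), replace_on l A (snd p) (fst p)))"
proof -
  let ?s = "\<lambda>(X, Y). (replace_on l A X Y, replace_on l A Y X)"
  have "bij_betw ?s (tuples n l \<times> tuples n l) (tuples n l \<times> tuples n l)"
    by (rule bij_betw_byWitness[where f' = ?s]) (auto simp: replace_on_swap_involution replace_on_in_tuples)
  from sum.reindex_bij_betw[OF this, of g] show ?thesis
    by (simp add: case_prod_beta)
qed

lemma sum_sum_replace_on:
  "(\<Sum>Y\<in>tuples n l. \<Sum>Z\<in>tuples n l. h (replace_on l B Y Z)) = real (card (tuples n l)) * (\<Sum>Y\<in>tuples n l. h Y)"
proof -
  have "(\<Sum>Y\<in>tuples n l. \<Sum>Z\<in>tuples n l. h (replace_on l B Y Z)) =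
     (\<Sum>p\<in>tuples n l \<times> tuples n l. h (replace_on l B (fst p) (snd p)))"
    by (simp add: sum.cartesian_product case_prod_beta)
  also have "\<dots> = (\<Sum>p\<in>tuples n l \<times> tuples n l. h (fst p))"
    using sum_replace_on_swap[of "\<lambda>p. h (fst p)" n l B] by simp
  also have "\<dots> = real (card (tuples n l)) * (\<Sum>Y\<in>tuples n l. h Y)"
    using sum.cartesian_product[of "\<lambda>Y Z. h Y" "tuples n l" "tuples n l"]
    by (simp add: case_prod_beta sum_distrib_left)
  finally show ?thesis .
qed

lemma resample_resample:
  assumes X: "X \<in> tuples n l"
  shows "resample n l A (resample n l B F) X = resample n l (A \<union> B) F X"
proof -
  let ?T = "tuples n l" let ?N = "real (card ?T)"
  have "resample n l A (resample n l B F) X = (\<Sum>Y\<in>?T. \<Sum>Z\<in>?T. F (replace_on l B (replace_on l A X Y) Z)) / ?N / ?N"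
    by (simp add: resample_def sum_divide_distrib)
  also have "(\<Sum>Y\<in>?T. \<Sum>Z\<in>?T. F (replace_on l B (replace_on l A X Y) Z)) =
      (\<Sum>Y\<in>?T. \<Sum>Z\<in>?T. F (replace_on l (A \<union> B) X (replace_on l B Y Z)))"
    by (intro sum.cong refl) (simp add: replace_on_replace_on[OF X])
  also have "\<dots> = ?N * (\<Sum>Y\<in>?T. F (replace_on l (A \<union> B) X Y))"
    by (rule sum_sum_replace_on)
  finally show ?thesis
    by (cases "?N = 0") (simp_all add: resample_def)
qed

lemma dot_resample: "dot n l G (resample n l A F) = dot n l (resample n l A G) F"
proof -
  let ?T = "tuples n l" let ?N = "real (card ?T)"
  have "dot n l G (resample n l A F) = (\<Sum>p\<in>?T \<times> ?T. G (fst p) * F (replace_on l A (fst p) (snd p))) / ?N"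
    by (simp add: dot_def resample_def sum.cartesian_product sum_distrib_left sum_divide_distrib case_prod_beta)
  also have "(\<Sum>p\<in>?T \<times> ?T. G (fst p) * F (replace_on l A (fst p) (snd p))) =
     (\<Sum>p\<in>?T \<times> ?T. G (replace_on l A (fst p) (snd p)) * F (fst p))"
  proof -
    have "(\<Sum>p\<in>?T \<times> ?T. G (replace_on l A (fst p) (snd p)) * F (fst p)) =
      (\<Sum>p\<in>?T \<times> ?T. G (replace_on l A (replace_on l A (fst p) (snd p)) (replace_on l A (snd p) (fst p))) * F (replace_on l A (fst p) (snd p)))"
      using sum_replace_on_swap[of "\<lambda>p. G (replace_on l A (fst p) (snd p)) * F (fst p)" n l A] by simp
    also have "\<dots> = (\<Sum>p\<in>?T \<times> ?T. G (fst p) * F (replace_on l A (fst p) (snd p)))"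
      by (rule sum.cong) (auto simp: replace_on_swap_involution)
    finally show ?thesis by simp
  qed
  also have "\<dots> / ?N = dot n l (resample n l A G) F"
    by (simp add: dot_def resample_def sum.cartesian_product sum_distrib_right sum_divide_distrib case_prod_beta)
  finally show ?thesis .
qed

lemma resample_empty:
  assumes "X \<in> tuples n l" and "0 < n"
  shows "resample n l {} F X = F X"
proof -
  have "replace_on l {} X Y = X" for Y
    using assms by (intro nth_equalityI) (auto simp: mem_tuples)
  moreover have "card (tuples n l) > 0"
    using assms by (simp add: card_tuples)
  moreover from this have "tuples n l \<noteq> {}"
    by auto
  ultimately show ?thesis
    by (simp add: resample_def)
qed

lemma resample_cong:
  "(\<And>Z. Z \<in> tuples n l \<Longrightarrow> F Z = G Z) \<Longrightarrow> X \<in> tuples n l \<Longrightarrow> resample n l A F X = resample n l A G X"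
  unfolding resample_def by (intro arg_cong2[where f="(/)"] sum.cong refl) (simp add: replace_on_in_tuples)

lemma resample_sum:
  "resample n l A (\<lambda>Z. \<Sum>b\<in>B. c b * H b Z) X = (\<Sum>b\<in>B. c b * resample n l A (H b) X)"
  unfolding resample_def by (simp add: sum_distrib_left sum_divide_distrib sum.swap[of _ B] mult.commute)

lemma resample_lincomb:
  "resample n l A (\<lambda>Z. a * F Z + b * G Z) X = a * resample n l A F X + b * resample n l A G X"
  unfolding resample_def by (simp add: sum.distrib sum_distrib_left add_divide_distrib)

section \<open>The Efron--Stein decomposition\<close>

definition efron_stein :: "nat \<Rightarrow> nat \<Rightarrow> nat set \<Rightarrow> (nat list \<Rightarrow> real) \<Rightarrow> nat list \<Rightarrow> real" where
  "efron_stein n l U F X = (\<Sum>B\<in>Pow U. (-1) ^ card (U - B) * resample n l ({..<l} - B) F X)"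

definition es_weight :: "nat \<Rightarrow> nat \<Rightarrow> nat set \<Rightarrow> (nat list \<Rightarrow> real) \<Rightarrow> real" where
  "es_weight n l U F = dot n l (efron_stein n l U F) (efron_stein n l U F)"

lemma sum_Pow_cancel:
  fixes g :: "'a set \<Rightarrow> real"
  assumes "finite U" "i \<in> U" "\<And>B. B \<subseteq> U - {i} \<Longrightarrow> g (insert i B) = - g B"
  shows "(\<Sum>B\<in>Pow U. g B) = 0"
proof -
  let ?U' = "U - {i}"
  have "U = insert i ?U'"
    using assms(2) by auto
  then have "Pow U = Pow ?U' \<union> insert i ` Pow ?U'"
    by (metis Pow_insert)
  moreover have "Pow ?U' \<inter> insert i ` Pow ?U' = {}" by auto
  moreover have "inj_on (insert i) (Pow ?U')" by (rule inj_onI) blast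
  ultimately have "(\<Sum>B\<in>Pow U. g B) = (\<Sum>B\<in>Pow ?U'. g B) + (\<Sum>B\<in>Pow ?U'. g (insert i B))"
    using assms(1) by (simp add: sum.union_disjoint sum.reindex)
  also have "(\<Sum>B\<in>Pow ?U'. g (insert i B)) = (\<Sum>B\<in>Pow ?U'. - g B)"
    using assms(3) by (intro sum.cong) auto
  finally show ?thesis by (simp add: sum_negf)
qed

lemma dot_efron_stein: "dot n l (efron_stein n l U F) G = dot n l F (efron_stein n l U G)"
proof -
  have "dot n l (efron_stein n l U F) G =
      (\<Sum>B\<in>Pow U. (-1) ^ card (U - B) * dot n l (resample n l ({..<l} - B) F) G)"
    unfolding efron_stein_def by (rule dot_sum_left)
  also have "\<dots> = (\<Sum>B\<in>Pow U. (-1) ^ card (U - B) * dot n l F (resample n l ({..<l} - B) G))"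
    by (intro sum.cong refl) (metis dot_resample dot_commute)
  also have "\<dots> = dot n l F (efron_stein n l U G)"
    unfolding efron_stein_def by (rule dot_sum_right[symmetric])
  finally show ?thesis .
qed

lemma efron_stein_lincomb:
  "efron_stein n l U (\<lambda>Z. a * F Z + b * G Z) X = a * efron_stein n l U F X + b * efron_stein n l U G X"
  unfolding efron_stein_def by (simp add: resample_lincomb sum.distrib sum_distrib_left algebra_simps)

lemma resample_efron_stein:
  assumes A: "A \<subseteq> {..<l}" and U: "U \<subseteq> {..<l}" and X: "X \<in> tuples n l"
  shows "resample n l A (efron_stein n l U F) X = (if A \<inter> U = {} then efron_stein n l U F X else 0)"
proof -
  have fU: "finite U" using U finite_subset by blast
  have eq: "resample n l A (efron_stein n l U F) X =
      (\<Sum>B\<in>Pow U. (-1) ^ card (U - B) * resample n l (A \<union> ({..<l} - B)) F X)"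
    unfolding efron_stein_def resample_sum
    by (intro sum.cong refl arg_cong2[where f="(*)"] resample_resample[OF X])
  show ?thesis
  proof (cases "A \<inter> U = {}")
    case True
    then have "A \<union> ({..<l} - B) = {..<l} - B" if "B \<in> Pow U" for B
      using that A by auto
    then have "(\<Sum>B\<in>Pow U. (-1) ^ card (U - B) * resample n l (A \<union> ({..<l} - B)) F X) =
        efron_stein n l U F X"
      unfolding efron_stein_def by (intro sum.cong refl) presburger
    then show ?thesis
      using True eq by presburger
  next
    case False
    then obtain i where i: "i \<in> A" "i \<in> U" by auto
    have "(\<Sum>B\<in>Pow U. (-1) ^ card (U - B) * resample n l (A \<union> ({..<l} - B)) F X) = 0"
    proof (rule sum_Pow_cancel[OF fU i(2)])
      fix B assume B: "B \<subseteq> U - {i}"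
      have "A \<union> ({..<l} - insert i B) = A \<union> ({..<l} - B)" using i by auto
      moreover have "card (U - B) = Suc (card (U - insert i B))"
      proof -
        have "U - B = insert i (U - insert i B)" using B i by auto
        then show ?thesis using fU by (metis card_insert_disjoint finite_Diff Diff_iff insertI1)
      qed
      ultimately show "(-1) ^ card (U - insert i B) * resample n l (A \<union> ({..<l} - insert i B)) F X =
          - ((-1) ^ card (U - B) * resample n l (A \<union> ({..<l} - B)) F X)"
        by simp
    qed
    then show ?thesis using False eq by simp
  qed
qed

lemma alternating_sum_supsets:
  assumes "finite I" and "B \<subseteq> I"
  shows "(\<Sum>U\<in>Pow I. if B \<subseteq> U then (-1::real) ^ card (U - B) else 0) = (if B = I then 1 else 0)"
proof (cases "B = I")
  case True
  have "(\<Sum>U\<in>Pow I. if B \<subseteq> U then (-1::real) ^ card (U - B) else 0) =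
        (\<Sum>U\<in>{B}. if B \<subseteq> U then (-1::real) ^ card (U - B) else 0)"
    by (rule sum.mono_neutral_right) (use assms(1) True in auto)
  then show ?thesis using True by simp
next
  case False
  then obtain i where i: "i \<in> I" "i \<notin> B" using assms(2) by auto
  have "(\<Sum>U\<in>Pow I. if B \<subseteq> U then (-1::real) ^ card (U - B) else 0) = 0"
  proof (rule sum_Pow_cancel[OF _ i(1)])
    fix U assume U: "U \<subseteq> I - {i}"
    have "finite (U - B)"
      by (rule finite_subset[OF _ assms(1)]) (use U in auto)
    moreover have "insert i U - B = insert i (U - B)" "i \<notin> U - B"
      using i U by auto
    ultimately have "card (insert i U - B) = Suc (card (U - B))" by simp
    moreover have "(B \<subseteq> insert i U) = (B \<subseteq> U)" using i by auto
    ultimately show "(if B \<subseteq> insert i U then (-1::real) ^ card (insert i U - B) else 0) =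
      - (if B \<subseteq> U then (-1) ^ card (U - B) else 0)" by simp
  qed (use assms(1) in simp)
  then show ?thesis using False by simp
qed

lemma sum_efron_stein:
  assumes X: "X \<in> tuples n l" and n: "0 < n"
  shows "(\<Sum>U\<in>Pow {..<l}. efron_stein n l U F X) = F X"
proof -
  let ?P = "\<lambda>B. resample n l ({..<l} - B) F X"
  have "(\<Sum>U\<in>Pow {..<l}. efron_stein n l U F X) =
     (\<Sum>U\<in>Pow {..<l}. \<Sum>B\<in>Pow {..<l}. if B \<subseteq> U then (-1) ^ card (U - B) * ?P B else 0)"
  proof (intro sum.cong refl)
    fix U assume "U \<in> Pow {..<l}"
    then have PowU: "Pow U = {B \<in> Pow {..<l}. B \<subseteq> U}" by auto
    show "efron_stein n l U F X =
        (\<Sum>B\<in>Pow {..<l}. if B \<subseteq> U then (-1) ^ card (U - B) * ?P B else 0)"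
      unfolding efron_stein_def PowU by (rule sum.inter_filter) simp
  qed
  also have "\<dots> = (\<Sum>B\<in>Pow {..<l}. ?P B * (\<Sum>U\<in>Pow {..<l}. if B \<subseteq> U then (-1) ^ card (U - B) else 0))"
    by (subst sum.swap) (auto simp: sum_distrib_left intro!: sum.cong)
  also have "\<dots> = (\<Sum>B\<in>Pow {..<l}. if B = {..<l} then ?P B else 0)"
    by (intro sum.cong refl) (simp add: alternating_sum_supsets[of "{..<l}"])
  also have "\<dots> = F X"
    by (simp add: resample_empty[OF X n])
  finally show ?thesis .
qed

lemma dot_efron_stein_orthogonal:
  assumes U: "U \<subseteq> {..<l}" and V: "V \<subseteq> {..<l}" and "U \<noteq> V"
  shows "dot n l (efron_stein n l U F) (efron_stein n l V G) = 0"
proof -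
  have main: "dot n l (efron_stein n l U F) (efron_stein n l V G) = 0"
    if U: "U \<subseteq> {..<l}" and V: "V \<subseteq> {..<l}" and i: "i \<in> U" "i \<notin> V" for U V F G i
  proof -
    have iI: "{i} \<subseteq> {..<l}" using i U by auto
    have "dot n l (efron_stein n l U F) (efron_stein n l V G) =
        dot n l (efron_stein n l U F) (resample n l {i} (efron_stein n l V G))"
      by (rule dot_cong) (use resample_efron_stein[OF iI V] i in auto)
    also have "\<dots> = dot n l (resample n l {i} (efron_stein n l U F)) (efron_stein n l V G)"
      by (rule dot_resample)
    also have "\<dots> = dot n l (\<lambda>_. 0) (efron_stein n l V G)"
      by (rule dot_cong) (use resample_efron_stein[OF iI U] i in auto)
    finally show ?thesis by (simp add: dot_def)
  qed
  from \<open>U \<noteq> V\<close> consider i where "i \<in> U" "i \<notin> V" | i where "i \<in> V" "i \<notin> U"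
    by blast
  then show ?thesis
  proof cases
    case 1
    then show ?thesis using main[OF U V] by blast
  next
    case 2
    then show ?thesis using main[OF V U] dot_commute by metis
  qed
qed

lemma resample_eq_sum_efron_stein:
  assumes A: "A \<subseteq> {..<l}" and X: "X \<in> tuples n l" and n: "0 < n"
  shows "resample n l A F X = (\<Sum>U\<in>{U\<in>Pow {..<l}. U \<inter> A = {}}. efron_stein n l U F X)"
proof -
  have "resample n l A F X = resample n l A (\<lambda>Z. \<Sum>U\<in>Pow {..<l}. 1 * efron_stein n l U F Z) X"
    by (rule resample_cong) (use sum_efron_stein n X in auto)
  also have "\<dots> = (\<Sum>U\<in>Pow {..<l}. 1 * resample n l A (efron_stein n l U F) X)"
    by (rule resample_sum)
  also have "\<dots> = (\<Sum>U\<in>Pow {..<l}. if U \<inter> A = {} then efron_stein n l U F X else 0)"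
    by (intro sum.cong refl) (use resample_efron_stein[OF A _ X] in \<open>auto simp: Int_commute\<close>)
  also have "\<dots> = (\<Sum>U\<in>{U\<in>Pow {..<l}. U \<inter> A = {}}. efron_stein n l U F X)"
    by (rule sum.inter_filter[symmetric]) simp
  finally show ?thesis .
qed

lemma dot_resample_eq_sum_es_weight:
  assumes A: "A \<subseteq> {..<l}" and n: "0 < n"
  shows "dot n l F (resample n l A F) = (\<Sum>U\<in>{U\<in>Pow {..<l}. U \<inter> A = {}}. es_weight n l U F)"
proof -
  let ?S = "{U\<in>Pow {..<l}. U \<inter> A = {}}"
  have "dot n l F (resample n l A F) =
      dot n l (\<lambda>X. \<Sum>V\<in>Pow {..<l}. 1 * efron_stein n l V F X) (\<lambda>X. \<Sum>U\<in>?S. 1 * efron_stein n l U F X)"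
    by (rule dot_cong) (use sum_efron_stein resample_eq_sum_efron_stein[OF A] n in auto)
  also have "\<dots> = (\<Sum>U\<in>?S. \<Sum>V\<in>Pow {..<l}. dot n l (efron_stein n l V F) (efron_stein n l U F))"
    unfolding dot_sum_left dot_sum_right by (subst sum.swap) simp
  also have "\<dots> = (\<Sum>U\<in>?S. \<Sum>V\<in>Pow {..<l}. if V = U then es_weight n l U F else 0)"
  proof (intro sum.cong refl)
    fix U V assume "U \<in> ?S" "V \<in> Pow {..<l}"
    then show "dot n l (efron_stein n l V F) (efron_stein n l U F) = (if V = U then es_weight n l U F else 0)"
      using dot_efron_stein_orthogonal[of V l U n F F] by (auto simp: es_weight_def)
  qed
  also have "\<dots> = (\<Sum>U\<in>?S. es_weight n l U F)"
    by (intro sum.cong refl) auto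
  finally show ?thesis .
qed

lemma dot_self_eq_sum_es_weight:
  assumes n: "0 < n"
  shows "dot n l F F = (\<Sum>U\<in>Pow {..<l}. es_weight n l U F)"
proof -
  have "dot n l F F = dot n l F (resample n l {} F)"
    by (rule dot_cong) (simp_all add: resample_empty n)
  also have "\<dots> = (\<Sum>U\<in>{U\<in>Pow {..<l}. U \<inter> {} = {}}. es_weight n l U F)"
    by (rule dot_resample_eq_sum_es_weight) (simp_all add: n)
  also have "{U\<in>Pow {..<l}. U \<inter> {} = {}} = Pow {..<l}"
    by auto
  finally show ?thesis .
qed

section \<open>The graph operator\<close>

lemma bij_betw_add_tuple:
  assumes X: "X \<in> tuples n l" and n: "0 < n"
  shows "bij_betw (\<lambda>Y. map (\<lambda>i. (X ! i + Y ! i) mod n) [0..<l]) (tuples n l) (tuples n l)"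
proof -
  have sub_add: "((x + y) mod n + (n - x)) mod n = y" if "x < n" "y < n" for x y
  proof -
    have "((x + y) mod n + (n - x)) mod n = (x + y + (n - x)) mod n"
      by (rule mod_add_left_eq)
    also have "x + y + (n - x) = y + n"
      using that by simp
    finally show ?thesis
      using that by simp
  qed
  have add_sub: "(x + (z + (n - x)) mod n) mod n = z" if "x < n" "z < n" for x z
    using that by (simp add: mod_add_right_eq)
  show ?thesis
    by (rule bij_betw_byWitness[where f'="\<lambda>Z. map (\<lambda>i. (Z ! i + (n - X ! i)) mod n) [0..<l]"])
      (use X n in \<open>auto simp: mem_tuples sub_add add_sub intro!: nth_equalityI\<close>)
qed

lemma sum_shift:
  assumes X: "X \<in> tuples n l" and n: "0 < n"
  shows "(\<Sum>Y\<in>tuples n l. F (shift n l S X Y)) = real (card (tuples n l)) * resample n l S F X"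
proof -
  have "shift n l S X Y = replace_on l S X (map (\<lambda>i. (X ! i + Y ! i) mod n) [0..<l])" for Y
    by (simp add: shift_def replace_on_def)
  then have "(\<Sum>Y\<in>tuples n l. F (shift n l S X Y)) = (\<Sum>Y\<in>tuples n l. F (replace_on l S X Y))"
    using sum.reindex_bij_betw[OF bij_betw_add_tuple[OF X n], of "\<lambda>Z. F (replace_on l S X Z)"] by simp
  then show ?thesis
    using n by (simp add: resample_def card_tuples)
qed

lemma Cop_eq_average_resample:
  assumes X: "X \<in> tuples n l" and n: "0 < n"
  shows "Cop n l \<alpha> F X = (\<Sum>S\<in>weight_sets \<alpha> l. resample n l S F X) / real (card (weight_sets \<alpha> l))"
  using n by (simp add: Cop_def sum_shift[OF X n] sum_distrib_left[symmetric] card_tuples)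

lemma finite_weight_sets: "finite (weight_sets \<alpha> l)"
  by (rule finite_subset[of _ "Pow {..<l}"]) (auto simp: weight_sets_def)

definition avoid_prob :: "real \<Rightarrow> nat \<Rightarrow> nat set \<Rightarrow> real" where
  "avoid_prob \<alpha> l U = real (card {S\<in>weight_sets \<alpha> l. S \<inter> U = {}}) / real (card (weight_sets \<alpha> l))"

lemma dot_Cop:
  assumes n: "0 < n"
  shows "dot n l F (Cop n l \<alpha> F) = (\<Sum>U\<in>Pow {..<l}. avoid_prob \<alpha> l U * es_weight n l U F)"
proof -
  let ?W = "weight_sets \<alpha> l"
  have "dot n l F (Cop n l \<alpha> F) = dot n l F (\<lambda>X. \<Sum>S\<in>?W. (1 / real (card ?W)) * resample n l S F X)"
    by (rule dot_cong) (simp_all add: Cop_eq_average_resample n sum_divide_distrib)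
  also have "\<dots> = (\<Sum>S\<in>?W. (1 / real (card ?W)) * dot n l F (resample n l S F))"
    by (rule dot_sum_right)
  also have "\<dots> = (\<Sum>S\<in>?W. \<Sum>U\<in>Pow {..<l}. (if S \<inter> U = {} then 1 / real (card ?W) else 0) * es_weight n l U F)"
  proof (intro sum.cong refl)
    fix S assume "S \<in> ?W"
    then have S: "S \<subseteq> {..<l}" by (auto simp: weight_sets_def)
    show "(1 / real (card ?W)) * dot n l F (resample n l S F) =
        (\<Sum>U\<in>Pow {..<l}. (if S \<inter> U = {} then 1 / real (card ?W) else 0) * es_weight n l U F)"
      unfolding dot_resample_eq_sum_es_weight[OF S n] sum_distrib_left
      by (subst sum.inter_filter) (auto simp: Int_commute intro!: sum.cong)
  qed
  also have "\<dots> = (\<Sum>U\<in>Pow {..<l}. (\<Sum>S\<in>?W. if S \<inter> U = {} then 1 / real (card ?W) else 0) * es_weight n l U F)"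
    by (subst sum.swap) (simp add: sum_distrib_right)
  also have "\<dots> = (\<Sum>U\<in>Pow {..<l}. avoid_prob \<alpha> l U * es_weight n l U F)"
    unfolding avoid_prob_def by (simp add: sum.inter_filter[OF finite_weight_sets, symmetric])
  finally show ?thesis .
qed

section \<open>Restrictions\<close>

lemma replace_on_suffix:
  assumes "X \<in> tuples n l" "Z \<in> tuples n l" "j \<le> l"
  shows "replace_on l ({..<l} - {..<j}) X Z = take j X @ drop j Z"
  using assms by (intro nth_equalityI) (auto simp: mem_tuples nth_append min_def)

lemma resample_suffix_eq_delta:
  assumes X: "X \<in> tuples n l" and j: "j \<le> l" and n: "0 < n"
  shows "resample n l ({..<l} - {..<j}) F X = delta n l F (take j X)"
proof -
  have "(\<Sum>Z\<in>tuples n l. F (replace_on l ({..<l} - {..<j}) X Z)) =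
      (\<Sum>Z\<in>tuples n l. F (take j X @ drop j Z))"
    by (intro sum.cong refl) (metis replace_on_suffix[OF X _ j])
  also have "\<dots> = (\<Sum>Y\<in>tuples n j. \<Sum>x\<in>tuples n (l - j). F (take j X @ drop j (Y @ x)))"
    by (rule sum_tuples_append[OF j])
  also have "\<dots> = real (n ^ j) * (\<Sum>x\<in>tuples n (l - j). F (take j X @ x))"
    by (simp add: mem_tuples card_tuples)
  finally have "(\<Sum>Z\<in>tuples n l. F (replace_on l ({..<l} - {..<j}) X Z)) =
      real (n ^ j) * (\<Sum>x\<in>tuples n (l - j). F (take j X @ x))" .
  moreover have "length (take j X) = j"
    using X j by (simp add: mem_tuples)
  moreover have "real (n ^ l) = real (n ^ j) * real (n ^ (l - j))"
    using j by (simp add: power_add[symmetric])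
  ultimately show ?thesis
    using n by (simp add: resample_def delta_def avg_def card_tuples)
qed

lemma avg_delta_squared:
  assumes j: "j \<le> l" and n: "0 < n"
  shows "avg n j (\<lambda>Y. (delta n l F Y)\<^sup>2) =
    dot n l F (resample n l ({..<l} - {..<j}) F) / real (card (tuples n l))"
proof -
  let ?A = "{..<l} - {..<j}"
  have "dot n l (resample n l ?A F) (resample n l ?A F) = (\<Sum>X\<in>tuples n l. (delta n l F (take j X))\<^sup>2)"
    unfolding dot_def by (intro sum.cong refl) (simp only: resample_suffix_eq_delta[OF _ j n] power2_eq_square)
  also have "\<dots> = (\<Sum>Y\<in>tuples n j. \<Sum>x\<in>tuples n (l - j). (delta n l F (take j (Y @ x)))\<^sup>2)"
    by (rule sum_tuples_append[OF j])
  also have "\<dots> = real (n ^ (l - j)) * (\<Sum>Y\<in>tuples n j. (delta n l F Y)\<^sup>2)"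
    by (simp add: mem_tuples card_tuples sum_distrib_left)
  finally have sq: "dot n l (resample n l ?A F) (resample n l ?A F) =
      real (n ^ (l - j)) * (\<Sum>Y\<in>tuples n j. (delta n l F Y)\<^sup>2)" .
  \<comment> \<open>resampling is an orthogonal projection\<close>
  have "dot n l (resample n l ?A F) (resample n l ?A F) = dot n l F (resample n l ?A (resample n l ?A F))"
    by (metis dot_resample dot_commute)
  also have "\<dots> = dot n l F (resample n l ?A F)"
    by (rule dot_cong) (simp_all add: resample_resample)
  finally have "dot n l F (resample n l ?A F) = real (n ^ (l - j)) * (\<Sum>Y\<in>tuples n j. (delta n l F Y)\<^sup>2)"
    using sq by simp
  moreover have "real (n ^ l) = real (n ^ j) * real (n ^ (l - j))"
    using j by (simp add: power_add[symmetric])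
  ultimately show ?thesis
    using n by (simp add: avg_def card_tuples field_simps)
qed

section \<open>Sum-of-squares certificates\<close>

definition linear_form :: "nat \<Rightarrow> nat \<Rightarrow> ((nat list \<Rightarrow> real) \<Rightarrow> real) \<Rightarrow> bool" where
  "linear_form n l L \<longleftrightarrow> (\<exists>a. \<forall>F. L F = (\<Sum>Y\<in>tuples n l. a Y * F Y))"

lemma linear_form_eval: assumes Z: "Z \<in> tuples n l" shows "linear_form n l (\<lambda>F. F Z)"
  unfolding linear_form_def
proof (intro exI[of _ "\<lambda>Y. if Y = Z then 1 else 0"] allI)
  fix F :: "nat list \<Rightarrow> real"
  have "(\<Sum>Y\<in>tuples n l. (if Y = Z then 1 else 0) * F Y) = (\<Sum>Y\<in>tuples n l. if Y = Z then F Y else 0)"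
    by (intro sum.cong) auto
  also have "\<dots> = F Z" using Z by simp
  finally show "F Z = (\<Sum>Y\<in>tuples n l. (if Y = Z then 1 else 0) * F Y)" by simp
qed

lemma linear_form_zero: "linear_form n l (\<lambda>F. 0)"
  unfolding linear_form_def by (rule exI[of _ "\<lambda>Y. 0"]) simp

lemma linear_form_add: "linear_form n l L1 \<Longrightarrow> linear_form n l L2 \<Longrightarrow> linear_form n l (\<lambda>F. L1 F + L2 F)"
  unfolding linear_form_def
proof (elim exE)
  fix a1 a2 assume "\<forall>F. L1 F = (\<Sum>Y\<in>tuples n l. a1 Y * F Y)" "\<forall>F. L2 F = (\<Sum>Y\<in>tuples n l. a2 Y * F Y)"
  then show "\<exists>a. \<forall>F. L1 F + L2 F = (\<Sum>Y\<in>tuples n l. a Y * F Y)"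
    by (intro exI[of _ "\<lambda>Y. a1 Y + a2 Y"]) (simp add: sum.distrib distrib_right)
qed

lemma linear_form_scale: "linear_form n l L \<Longrightarrow> linear_form n l (\<lambda>F. c * L F)"
  unfolding linear_form_def
proof (elim exE)
  fix a assume "\<forall>F. L F = (\<Sum>Y\<in>tuples n l. a Y * F Y)"
  then show "\<exists>a'. \<forall>F. c * L F = (\<Sum>Y\<in>tuples n l. a' Y * F Y)"
    by (intro exI[of _ "\<lambda>Y. c * a Y"]) (simp add: sum_distrib_left mult.assoc)
qed

lemma linear_form_sum: "finite B \<Longrightarrow> (\<And>b. b \<in> B \<Longrightarrow> linear_form n l (L b)) \<Longrightarrow> linear_form n l (\<lambda>F. \<Sum>b\<in>B. L b F)"
proof (induction B rule: finite_induct)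
  case empty then show ?case by (simp add: linear_form_zero)
next
  case (insert x B)
  then show ?case using linear_form_add[of n l "L x" "\<lambda>F. \<Sum>b\<in>B. L b F"] by simp
qed

lemma linear_form_resample:
  assumes X: "X \<in> tuples n l" and H: "\<And>Z. Z \<in> tuples n l \<Longrightarrow> linear_form n l (\<lambda>F. H F Z)"
  shows "linear_form n l (\<lambda>F. resample n l A (H F) X)"
proof -
  have "linear_form n l (\<lambda>F. \<Sum>Y\<in>tuples n l. (1 / real (card (tuples n l))) * H F (replace_on l A X Y))"
    by (intro linear_form_sum linear_form_scale H replace_on_in_tuples X) auto
  then show ?thesis unfolding resample_def by (simp add: sum_divide_distrib)
qed

lemma linear_form_efron_stein:
  assumes X: "X \<in> tuples n l" and U: "U \<subseteq> {..<l}" and H: "\<And>Z. Z \<in> tuples n l \<Longrightarrow> linear_form n l (\<lambda>F. H F Z)"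
  shows "linear_form n l (\<lambda>F. efron_stein n l U (H F) X)"
  unfolding efron_stein_def
proof (intro linear_form_sum linear_form_scale linear_form_resample X H)
  show "finite (Pow U)" using U finite_subset by blast
qed

definition sos_affine :: "nat \<Rightarrow> nat \<Rightarrow> ((nat list \<Rightarrow> real) \<Rightarrow> real) \<Rightarrow> bool" where
  "sos_affine n l P \<longleftrightarrow> (\<exists>(m::nat) (a::nat \<Rightarrow> nat list \<Rightarrow> real) (c::nat \<Rightarrow> real).
      \<forall>F. P F = (\<Sum>k<m. (c k + (\<Sum>Y\<in>tuples n l. a k Y * F Y))\<^sup>2))"

lemma sos_affineI:
  fixes m :: nat
  assumes "\<And>F. P F = (\<Sum>k<m. (c k + (\<Sum>Y\<in>tuples n l. a k Y * F Y))\<^sup>2)"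
  shows "sos_affine n l P"
  unfolding sos_affine_def using assms by blast

lemma sum_lessThan_add:
  fixes f :: "nat \<Rightarrow> 'a::comm_monoid_add"
  shows "(\<Sum>k<m1 + m2. f k) = (\<Sum>k<m1. f k) + (\<Sum>k<m2. f (m1 + k))"
  by (induction m2) (simp_all add: add.assoc)

lemma sos_affine_zero: "sos_affine n l (\<lambda>F. 0)"
  unfolding sos_affine_def by (rule exI[of _ 0]) simp

lemma sos_affine_square: assumes "linear_form n l L" shows "sos_affine n l (\<lambda>F. (L F)\<^sup>2)"
proof -
  from assms obtain a where "\<And>F. L F = (\<Sum>Y\<in>tuples n l. a Y * F Y)" unfolding linear_form_def by blast
  then show ?thesis by (intro sos_affineI[where m=1 and c="\<lambda>_. 0" and a="\<lambda>_. a"]) simp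
qed

lemma sos_affine_scale:
  assumes c: "c \<ge> 0" and P: "sos_affine n l P"
  shows "sos_affine n l (\<lambda>F. c * P F)"
proof -
  from P obtain m :: nat and a c0 where e: "\<And>F. P F = (\<Sum>k<m. (c0 k + (\<Sum>Y\<in>tuples n l. a k Y * F Y))\<^sup>2)"
    unfolding sos_affine_def by blast
  have "c * P F = (\<Sum>k<m. (sqrt c * c0 k + (\<Sum>Y\<in>tuples n l. (sqrt c * a k Y) * F Y))\<^sup>2)" for F
  proof -
    have "c * P F = (\<Sum>k<m. (sqrt c * (c0 k + (\<Sum>Y\<in>tuples n l. a k Y * F Y)))\<^sup>2)"
      unfolding e by (simp add: sum_distrib_left power_mult_distrib c)
    also have "\<dots> = (\<Sum>k<m. (sqrt c * c0 k + (\<Sum>Y\<in>tuples n l. (sqrt c * a k Y) * F Y))\<^sup>2)"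
      by (simp add: distrib_left sum_distrib_left mult.assoc)
    finally show ?thesis .
  qed
  then show ?thesis by (rule sos_affineI)
qed

lemma sos_affine_add:
  assumes P: "sos_affine n l P" and Q: "sos_affine n l Q"
  shows "sos_affine n l (\<lambda>F. P F + Q F)"
proof -
  from P obtain m1 :: nat and a1 c1 where e1: "\<And>F. P F = (\<Sum>k<m1. (c1 k + (\<Sum>Y\<in>tuples n l. a1 k Y * F Y))\<^sup>2)"
    unfolding sos_affine_def by blast
  from Q obtain m2 :: nat and a2 c2 where e2: "\<And>F. Q F = (\<Sum>k<m2. (c2 k + (\<Sum>Y\<in>tuples n l. a2 k Y * F Y))\<^sup>2)"
    unfolding sos_affine_def by blast
  define a where "a k = (if k < m1 then a1 k else a2 (k - m1))" for k
  define c where "c k = (if k < m1 then c1 k else c2 (k - m1))" for k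
  have "P F + Q F = (\<Sum>k<m1 + m2. (c k + (\<Sum>Y\<in>tuples n l. a k Y * F Y))\<^sup>2)" for F
  proof -
    have "(\<Sum>k<m1 + m2. (c k + (\<Sum>Y\<in>tuples n l. a k Y * F Y))\<^sup>2) =
       (\<Sum>k<m1. (c k + (\<Sum>Y\<in>tuples n l. a k Y * F Y))\<^sup>2) + (\<Sum>k<m2. (c (m1 + k) + (\<Sum>Y\<in>tuples n l. a (m1 + k) Y * F Y))\<^sup>2)"
      by (rule sum_lessThan_add)
    also have "\<dots> = P F + Q F"
      unfolding e1 e2 a_def c_def by simp
    finally show ?thesis by simp
  qed
  then show ?thesis by (rule sos_affineI)
qed

lemma sos_affine_sum: "finite B \<Longrightarrow> (\<And>b. b \<in> B \<Longrightarrow> sos_affine n l (P b)) \<Longrightarrow> sos_affine n l (\<lambda>F. \<Sum>b\<in>B. P b F)"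
proof (induction B rule: finite_induct)
  case empty then show ?case by (simp add: sos_affine_zero)
next
  case (insert x B)
  then show ?case using sos_affine_add[of n l "P x" "\<lambda>F. \<Sum>b\<in>B. P b F"] by simp
qed

lemma es_weight_sos:
  assumes U: "U \<subseteq> {..<l}"
  shows "sos_affine n l (es_weight n l U)"
proof -
  have "sos_affine n l (\<lambda>F. \<Sum>X\<in>tuples n l. (efron_stein n l U F X)\<^sup>2)"
    by (intro sos_affine_sum sos_affine_square linear_form_efron_stein U linear_form_eval) auto
  moreover have "es_weight n l U = (\<lambda>F. \<Sum>X\<in>tuples n l. (efron_stein n l U F X)\<^sup>2)"
    by (simp add: es_weight_def dot_def power2_eq_square fun_eq_iff)
  ultimately show ?thesis by simp
qed

definition perm_ideal :: "nat \<Rightarrow> nat \<Rightarrow> ((nat list \<Rightarrow> real) \<Rightarrow> real) \<Rightarrow> bool" where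
  "perm_ideal n l P \<longleftrightarrow> (\<exists>(q::nat list \<Rightarrow> (nat \<Rightarrow> nat) \<Rightarrow> nat list \<Rightarrow> real) (d::nat list \<Rightarrow> (nat \<Rightarrow> nat) \<Rightarrow> real).
      \<forall>F. P F = (\<Sum>X\<in>tuples n l. \<Sum>\<sigma>\<in>{\<sigma>. \<sigma> permutes {..<l}}.
                   (d X \<sigma> + (\<Sum>Y\<in>tuples n l. q X \<sigma> Y * F Y)) * (F X - F (permute_tuple l \<sigma> X))))"

lemma perm_idealI:
  assumes "\<And>F. P F = (\<Sum>X\<in>tuples n l. \<Sum>\<sigma>\<in>{\<sigma>. \<sigma> permutes {..<l}}.
                   (d X \<sigma> + (\<Sum>Y\<in>tuples n l. q X \<sigma> Y * F Y)) * (F X - F (permute_tuple l \<sigma> X)))"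
  shows "perm_ideal n l P"
  unfolding perm_ideal_def using assms by blast

lemma perm_ideal_zero: "perm_ideal n l (\<lambda>F. 0)"
  unfolding perm_ideal_def by (intro exI[of _ "\<lambda>_ _ _. 0"] exI[of _ "\<lambda>_ _. 0"]) simp

lemma perm_ideal_add:
  assumes P: "perm_ideal n l P" and Q: "perm_ideal n l Q"
  shows "perm_ideal n l (\<lambda>F. P F + Q F)"
proof -
  from P obtain q1 d1 where e1: "\<And>F. P F = (\<Sum>X\<in>tuples n l. \<Sum>\<sigma>\<in>{\<sigma>. \<sigma> permutes {..<l}}.
                   (d1 X \<sigma> + (\<Sum>Y\<in>tuples n l. q1 X \<sigma> Y * F Y)) * (F X - F (permute_tuple l \<sigma> X)))"
    unfolding perm_ideal_def by blast
  from Q obtain q2 d2 where e2: "\<And>F. Q F = (\<Sum>X\<in>tuples n l. \<Sum>\<sigma>\<in>{\<sigma>. \<sigma> permutes {..<l}}.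
                   (d2 X \<sigma> + (\<Sum>Y\<in>tuples n l. q2 X \<sigma> Y * F Y)) * (F X - F (permute_tuple l \<sigma> X)))"
    unfolding perm_ideal_def by blast
  show ?thesis
  proof (rule perm_idealI[where q="\<lambda>X \<sigma> Y. q1 X \<sigma> Y + q2 X \<sigma> Y" and d="\<lambda>X \<sigma>. d1 X \<sigma> + d2 X \<sigma>"])
    fix F :: "nat list \<Rightarrow> real"
    have inner: "(d1 X \<sigma> + d2 X \<sigma> + (\<Sum>Y\<in>tuples n l. (q1 X \<sigma> Y + q2 X \<sigma> Y) * F Y)) * z =
       (d1 X \<sigma> + (\<Sum>Y\<in>tuples n l. q1 X \<sigma> Y * F Y)) * z + (d2 X \<sigma> + (\<Sum>Y\<in>tuples n l. q2 X \<sigma> Y * F Y)) * z" for X \<sigma> z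
      by (simp add: distrib_right sum.distrib algebra_simps)
    show "P F + Q F = (\<Sum>X\<in>tuples n l. \<Sum>\<sigma>\<in>{\<sigma>. \<sigma> permutes {..<l}}.
         (d1 X \<sigma> + d2 X \<sigma> + (\<Sum>Y\<in>tuples n l. (q1 X \<sigma> Y + q2 X \<sigma> Y) * F Y)) * (F X - F (permute_tuple l \<sigma> X)))"
      unfolding inner e1 e2 by (simp add: sum.distrib)
  qed
qed

lemma perm_ideal_scale:
  assumes P: "perm_ideal n l P"
  shows "perm_ideal n l (\<lambda>F. c * P F)"
proof -
  from P obtain q1 d1 where e1: "\<And>F. P F = (\<Sum>X\<in>tuples n l. \<Sum>\<sigma>\<in>{\<sigma>. \<sigma> permutes {..<l}}.
                   (d1 X \<sigma> + (\<Sum>Y\<in>tuples n l. q1 X \<sigma> Y * F Y)) * (F X - F (permute_tuple l \<sigma> X)))"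
    unfolding perm_ideal_def by blast
  show ?thesis
  proof (rule perm_idealI[where q="\<lambda>X \<sigma> Y. c * q1 X \<sigma> Y" and d="\<lambda>X \<sigma>. c * d1 X \<sigma>"])
    fix F :: "nat list \<Rightarrow> real"
    have inner: "(c * d1 X \<sigma> + (\<Sum>Y\<in>tuples n l. c * q1 X \<sigma> Y * F Y)) * z =
       c * ((d1 X \<sigma> + (\<Sum>Y\<in>tuples n l. q1 X \<sigma> Y * F Y)) * z)" for X \<sigma> z
      by (simp add: sum_distrib_left algebra_simps)
    show "c * P F = (\<Sum>X\<in>tuples n l. \<Sum>\<sigma>\<in>{\<sigma>. \<sigma> permutes {..<l}}.
         (c * d1 X \<sigma> + (\<Sum>Y\<in>tuples n l. c * q1 X \<sigma> Y * F Y)) * (F X - F (permute_tuple l \<sigma> X)))"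
      unfolding inner e1 by (simp add: sum_distrib_left)
  qed
qed

lemma perm_ideal_sum: "finite B \<Longrightarrow> (\<And>b. b \<in> B \<Longrightarrow> perm_ideal n l (P b)) \<Longrightarrow> perm_ideal n l (\<lambda>F. \<Sum>b\<in>B. P b F)"
proof (induction B rule: finite_induct)
  case empty then show ?case by (simp add: perm_ideal_zero)
next
  case (insert x B)
  then show ?case using perm_ideal_add[of n l "P x" "\<lambda>F. \<Sum>b\<in>B. P b F"] by simp
qed

lemma perm_ideal_generator:
  assumes X: "X \<in> tuples n l" and s: "\<sigma> permutes {..<l}" and L: "linear_form n l L"
  shows "perm_ideal n l (\<lambda>F. L F * (F X - F (permute_tuple l \<sigma> X)))"
proof -
  from L obtain a where a: "\<And>F. L F = (\<Sum>Y\<in>tuples n l. a Y * F Y)" unfolding linear_form_def by blast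
  have fp: "finite {\<sigma>. \<sigma> permutes {..<l}}" by (rule finite_permutations) simp
  have "L F * (F X - F (permute_tuple l \<sigma> X)) =
     (\<Sum>X'\<in>tuples n l. \<Sum>\<sigma>'\<in>{\<sigma>. \<sigma> permutes {..<l}}.
       (0 + (\<Sum>Y\<in>tuples n l. (if X' = X \<and> \<sigma>' = \<sigma> then a Y else 0) * F Y)) * (F X' - F (permute_tuple l \<sigma>' X')))" for F
  proof -
    have "(\<Sum>X'\<in>tuples n l. \<Sum>\<sigma>'\<in>{\<sigma>. \<sigma> permutes {..<l}}.
       (0 + (\<Sum>Y\<in>tuples n l. (if X' = X \<and> \<sigma>' = \<sigma> then a Y else 0) * F Y)) * (F X' - F (permute_tuple l \<sigma>' X')))
      = (\<Sum>X'\<in>tuples n l. \<Sum>\<sigma>'\<in>{\<sigma>. \<sigma> permutes {..<l}}.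
       (if X' = X then (if \<sigma>' = \<sigma> then L F * (F X - F (permute_tuple l \<sigma> X)) else 0) else 0))"
      by (intro sum.cong refl) (auto simp: a)
    also have "\<dots> = (\<Sum>X'\<in>tuples n l. if X' = X then L F * (F X - F (permute_tuple l \<sigma> X)) else 0)"
      by (intro sum.cong refl) (use s fp in simp)
    also have "\<dots> = L F * (F X - F (permute_tuple l \<sigma> X))"
      using X by simp
    finally show ?thesis by simp
  qed
  then show ?thesis by (rule perm_idealI)
qed

lemma sos2_proofI:
  assumes S: "sos_affine n l S" and I: "perm_ideal n l J" and e: "\<And>F. P F = S F + J F"
  shows "sos2_proof n l P"
proof -
  from S obtain m :: nat and a c where es: "\<And>F. S F = (\<Sum>k<m. (c k + (\<Sum>Y\<in>tuples n l. a k Y * F Y))\<^sup>2)"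
    unfolding sos_affine_def by blast
  from I obtain q d where ei: "\<And>F. J F = (\<Sum>X\<in>tuples n l. \<Sum>\<sigma>\<in>{\<sigma>. \<sigma> permutes {..<l}}.
                   (d X \<sigma> + (\<Sum>Y\<in>tuples n l. q X \<sigma> Y * F Y)) * (F X - F (permute_tuple l \<sigma> X)))"
    unfolding perm_ideal_def by blast
  show ?thesis unfolding sos2_proof_def
    by (intro exI[of _ m] exI[of _ a] exI[of _ c] exI[of _ "\<lambda>_. 0"] exI[of _ "\<lambda>_. 0"] exI[of _ q] exI[of _ d])
       (simp add: e es ei)
qed

lemma sos2_proof_nonneg:
  assumes P: "sos2_proof n l P" and B: "\<forall>X\<in>tuples n l. 0 \<le> F X \<and> F X \<le> 1" and inv: "perm_invariant n l F"
  shows "0 \<le> P F"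
proof -
  from P obtain m :: nat and a c lam mu q d where
    nn: "\<forall>X\<in>tuples n l. lam X \<ge> 0 \<and> mu X \<ge> 0" and
    e: "\<forall>F::nat list \<Rightarrow> real.
          P F = (\<Sum>k<m. (c k + (\<Sum>Y\<in>tuples n l. a k Y * F Y))\<^sup>2)
              + (\<Sum>X\<in>tuples n l. lam X * F X + mu X * (1 - F X))
              + (\<Sum>X\<in>tuples n l. \<Sum>\<sigma>\<in>{\<sigma>. \<sigma> permutes {..<l}}.
                   (d X \<sigma> + (\<Sum>Y\<in>tuples n l. q X \<sigma> Y * F Y)) * (F X - F (permute_tuple l \<sigma> X)))"
    unfolding sos2_proof_def by blast
  have t1: "0 \<le> (\<Sum>k<m. (c k + (\<Sum>Y\<in>tuples n l. a k Y * F Y))\<^sup>2)" by (intro sum_nonneg) simp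
  have t2: "0 \<le> (\<Sum>X\<in>tuples n l. lam X * F X + mu X * (1 - F X))"
    using nn B by (intro sum_nonneg add_nonneg_nonneg mult_nonneg_nonneg) auto
  have t3: "(\<Sum>X\<in>tuples n l. \<Sum>\<sigma>\<in>{\<sigma>. \<sigma> permutes {..<l}}.
                   (d X \<sigma> + (\<Sum>Y\<in>tuples n l. q X \<sigma> Y * F Y)) * (F X - F (permute_tuple l \<sigma> X))) = 0"
    using inv unfolding perm_invariant_def by (intro sum.neutral ballI) auto
  show ?thesis using e t1 t2 t3 by simp
qed

section \<open>Symmetry\<close>

lemma length_permute_tuple[simp]: "length (permute_tuple l \<sigma> X) = l"
  by (simp add: permute_tuple_def)

lemma nth_permute_tuple[simp]: "i < l \<Longrightarrow> permute_tuple l \<sigma> X ! i = X ! \<sigma> i"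
  by (simp add: permute_tuple_def)

lemma permutes_less: "\<sigma> permutes {..<l} \<Longrightarrow> i < l \<Longrightarrow> \<sigma> i < l"
  using permutes_in_image[of \<sigma> "{..<l}" i] by simp

lemma permute_tuple_in_tuples: "\<sigma> permutes {..<l} \<Longrightarrow> X \<in> tuples n l \<Longrightarrow> permute_tuple l \<sigma> X \<in> tuples n l"
  by (auto simp: mem_tuples permutes_less)

lemma bij_betw_permute_tuple:
  assumes s: "\<sigma> permutes {..<l}"
  shows "bij_betw (permute_tuple l \<sigma>) (tuples n l) (tuples n l)"
proof (rule bij_betw_byWitness[where f'="permute_tuple l (inv \<sigma>)"])
  have si: "inv \<sigma> permutes {..<l}" using s by (rule permutes_inv)
  show "\<forall>a\<in>tuples n l. permute_tuple l (inv \<sigma>) (permute_tuple l \<sigma> a) = a"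
    using s si by (auto simp: mem_tuples permutes_less permutes_inverses intro!: nth_equalityI)
  show "\<forall>a\<in>tuples n l. permute_tuple l \<sigma> (permute_tuple l (inv \<sigma>) a) = a"
    using s si by (auto simp: mem_tuples permutes_less permutes_inverses intro!: nth_equalityI)
  show "permute_tuple l \<sigma> ` tuples n l \<subseteq> tuples n l" using permute_tuple_in_tuples[OF s] by auto
  show "permute_tuple l (inv \<sigma>) ` tuples n l \<subseteq> tuples n l" using permute_tuple_in_tuples[OF si] by auto
qed

lemma sum_permute_tuple:
  assumes s: "\<sigma> permutes {..<l}"
  shows "(\<Sum>X\<in>tuples n l. g (permute_tuple l \<sigma> X)) = (\<Sum>X\<in>tuples n l. g X)"
  by (rule sum.reindex_bij_betw[OF bij_betw_permute_tuple[OF s]])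

lemma permute_tuple_replace_on:
  assumes s: "\<sigma> permutes {..<l}"
  shows "permute_tuple l \<sigma> (replace_on l (\<sigma> ` A) X Z) = replace_on l A (permute_tuple l \<sigma> X) (permute_tuple l \<sigma> Z)"
proof (rule nth_equalityI)
  fix i assume "i < length (permute_tuple l \<sigma> (replace_on l (\<sigma> ` A) X Z))"
  then have i: "i < l" by simp
  have "(\<sigma> i \<in> \<sigma> ` A) = (i \<in> A)" using permutes_inj[OF s] by (auto simp: inj_eq)
  then show "permute_tuple l \<sigma> (replace_on l (\<sigma> ` A) X Z) ! i = replace_on l A (permute_tuple l \<sigma> X) (permute_tuple l \<sigma> Z) ! i"
    using i permutes_less[OF s i] by simp
qed simp

lemma resample_permute:
  assumes s: "\<sigma> permutes {..<l}" and X: "X \<in> tuples n l"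
  shows "resample n l A F (permute_tuple l \<sigma> X) = resample n l (\<sigma> ` A) (\<lambda>Y. F (permute_tuple l \<sigma> Y)) X"
proof -
  have "(\<Sum>Z\<in>tuples n l. F (replace_on l A (permute_tuple l \<sigma> X) Z)) =
        (\<Sum>Z\<in>tuples n l. F (replace_on l A (permute_tuple l \<sigma> X) (permute_tuple l \<sigma> Z)))"
    by (rule sum_permute_tuple[OF s, symmetric])
  also have "\<dots> = (\<Sum>Z\<in>tuples n l. F (permute_tuple l \<sigma> (replace_on l (\<sigma> ` A) X Z)))"
    by (simp add: permute_tuple_replace_on[OF s])
  finally show ?thesis by (simp add: resample_def)
qed

lemma efron_stein_permute:
  assumes s: "\<sigma> permutes {..<l}" and X: "X \<in> tuples n l" and U: "U \<subseteq> {..<l}"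
  shows "efron_stein n l U F (permute_tuple l \<sigma> X) = efron_stein n l (\<sigma> ` U) (\<lambda>Y. F (permute_tuple l \<sigma> Y)) X"
proof -
  let ?G = "\<lambda>Y. F (permute_tuple l \<sigma> Y)"
  have inj: "inj \<sigma>" using s by (rule permutes_inj)
  have bU: "bij_betw ((`) \<sigma>) (Pow U) (Pow (\<sigma> ` U))"
    by (rule bij_betw_Pow) (simp add: bij_betw_def inj_on_subset[OF inj subset_UNIV])
  have "efron_stein n l U F (permute_tuple l \<sigma> X) = (\<Sum>B\<in>Pow U. (-1) ^ card (U - B) * resample n l (\<sigma> ` ({..<l} - B)) ?G X)"
    unfolding efron_stein_def by (simp add: resample_permute[OF s X])
  also have "\<dots> = (\<Sum>B\<in>Pow U. (-1) ^ card (\<sigma> ` U - \<sigma> ` B) * resample n l ({..<l} - \<sigma> ` B) ?G X)"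
  proof (intro sum.cong refl)
    fix B assume "B \<in> Pow U"
    have "\<sigma> ` ({..<l} - B) = \<sigma> ` {..<l} - \<sigma> ` B" by (rule image_set_diff[OF inj])
    also have "\<sigma> ` {..<l} = {..<l}" using s by (rule permutes_image)
    finally have e1: "\<sigma> ` ({..<l} - B) = {..<l} - \<sigma> ` B" .
    have "card (\<sigma> ` U - \<sigma> ` B) = card (\<sigma> ` (U - B))" by (simp add: image_set_diff[OF inj])
    also have "\<dots> = card (U - B)" by (rule card_image) (rule inj_on_subset[OF inj subset_UNIV])
    finally show "(-1) ^ card (U - B) * resample n l (\<sigma> ` ({..<l} - B)) ?G X =
        (-1) ^ card (\<sigma> ` U - \<sigma> ` B) * resample n l ({..<l} - \<sigma> ` B) ?G X" using e1 by simp
  qed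
  also have "\<dots> = efron_stein n l (\<sigma> ` U) ?G X"
    unfolding efron_stein_def
    by (rule sum.reindex_bij_betw[OF bU, where g="\<lambda>B. (-1) ^ card (\<sigma> ` U - B) * resample n l ({..<l} - B) ?G X"])
  finally show ?thesis .
qed

lemma es_weight_permute:
  assumes s: "\<sigma> permutes {..<l}" and U: "U \<subseteq> {..<l}"
  shows "es_weight n l U F = es_weight n l (\<sigma> ` U) (\<lambda>Y. F (permute_tuple l \<sigma> Y))"
proof -
  have "es_weight n l U F = (\<Sum>X\<in>tuples n l. (\<lambda>X. efron_stein n l U F X * efron_stein n l U F X) (permute_tuple l \<sigma> X))"
    unfolding es_weight_def dot_def by (rule sum_permute_tuple[OF s, symmetric])
  also have "\<dots> = es_weight n l (\<sigma> ` U) (\<lambda>Y. F (permute_tuple l \<sigma> Y))"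
    unfolding es_weight_def dot_def by (intro sum.cong refl) (simp add: efron_stein_permute[OF s _ U])
  finally show ?thesis .
qed

lemma linear_form_add_permuted:
  assumes s: "\<sigma> permutes {..<l}" and Z: "Z \<in> tuples n l"
  shows "linear_form n l (\<lambda>F. F Z + F (permute_tuple l \<sigma> Z))"
  by (intro linear_form_add linear_form_eval Z permute_tuple_in_tuples[OF s])

text \<open>
  With G = F \<circ> \<sigma>, self-adjointness gives |F_V|^2 - |G_V|^2 = \<langle>(F + G)_V, (F - G)_V\<rangle> =
  \<langle>((F + G)_V)_V, F - G\<rangle>, a combination of the axioms F X - G X = 0 with linear multipliers.
\<close>

lemma es_weight_permute_diff_ideal:
  assumes s: "\<sigma> permutes {..<l}" and V: "V \<subseteq> {..<l}"
  shows "perm_ideal n l (\<lambda>F. es_weight n l V F - es_weight n l V (\<lambda>Y. F (permute_tuple l \<sigma> Y)))"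
proof -
  define L where "L X F = efron_stein n l V (efron_stein n l V (\<lambda>Z. F Z + F (permute_tuple l \<sigma> Z))) X" for X F
  have eq: "es_weight n l V F - es_weight n l V (\<lambda>Y. F (permute_tuple l \<sigma> Y)) =
      (\<Sum>X\<in>tuples n l. L X F * (F X - F (permute_tuple l \<sigma> X)))" for F
  proof -
    let ?G = "\<lambda>Y. F (permute_tuple l \<sigma> Y)"
    have p: "efron_stein n l V (\<lambda>Z. F Z + ?G Z) X = efron_stein n l V F X + efron_stein n l V ?G X" for X
      using efron_stein_lincomb[of n l V 1 F 1 ?G X] by simp
    have m: "efron_stein n l V (\<lambda>Z. F Z - ?G Z) X = efron_stein n l V F X - efron_stein n l V ?G X" for X
      using efron_stein_lincomb[of n l V 1 F "-1" ?G X] by simp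
    have "es_weight n l V F - es_weight n l V ?G = dot n l (efron_stein n l V (\<lambda>Z. F Z + ?G Z)) (efron_stein n l V (\<lambda>Z. F Z - ?G Z))"
      unfolding es_weight_def dot_def p m by (simp add: sum_subtractf[symmetric] algebra_simps)
    also have "\<dots> = dot n l (efron_stein n l V (efron_stein n l V (\<lambda>Z. F Z + ?G Z))) (\<lambda>Z. F Z - ?G Z)"
      by (metis dot_efron_stein dot_commute)
    also have "\<dots> = (\<Sum>X\<in>tuples n l. L X F * (F X - F (permute_tuple l \<sigma> X)))"
      unfolding dot_def L_def by simp
    finally show ?thesis .
  qed
  have "perm_ideal n l (\<lambda>F. \<Sum>X\<in>tuples n l. L X F * (F X - F (permute_tuple l \<sigma> X)))"
  proof (intro perm_ideal_sum perm_ideal_generator s)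
    fix X assume X: "X \<in> tuples n l"
    show "linear_form n l (L X)" unfolding L_def
      by (intro linear_form_efron_stein X V linear_form_add_permuted[OF s]) (intro linear_form_efron_stein V linear_form_add_permuted[OF s] | assumption)+
  qed auto
  then show ?thesis unfolding eq by simp
qed

lemma permutes_onto_initial_segment:
  assumes U: "U \<subseteq> {..<l}"
  shows "\<exists>\<sigma>. \<sigma> permutes {..<l} \<and> \<sigma> ` U = {..<card U}"
proof -
  let ?k = "card U" let ?I = "{..<l::nat}"
  have fU: "finite U" using U finite_subset by blast
  have kl: "?k \<le> l" using card_mono[OF _ U] by simp
  obtain f where f: "bij_betw f U {..<?k}" using finite_same_card_bij[OF fU, of "{..<?k}"] by auto
  have c2: "card (?I - U) = card (?I - {..<?k})"
    using U kl by (simp add: card_Diff_subset fU)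
  obtain g where g: "bij_betw g (?I - U) (?I - {..<?k})"
    using finite_same_card_bij[OF _ _ c2] by auto
  define \<sigma> where "\<sigma> x = (if x \<in> U then f x else if x \<in> ?I then g x else x)" for x
  have b1: "bij_betw \<sigma> U {..<?k}" using f by (rule bij_betw_cong[THEN iffD1, rotated]) (simp add: \<sigma>_def)
  have b2: "bij_betw \<sigma> (?I - U) (?I - {..<?k})" using g by (rule bij_betw_cong[THEN iffD1, rotated]) (simp add: \<sigma>_def)
  have "bij_betw \<sigma> (U \<union> (?I - U)) ({..<?k} \<union> (?I - {..<?k}))"
    by (rule bij_betw_combine[OF b1 b2]) auto
  moreover have "U \<union> (?I - U) = ?I" "{..<?k} \<union> (?I - {..<?k}) = ?I" using U kl by auto
  ultimately have "bij_betw \<sigma> ?I ?I" by simp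
  then have "\<sigma> permutes ?I" by (rule bij_imp_permutes) (use U in \<open>auto simp: \<sigma>_def\<close>)
  moreover have "\<sigma> ` U = {..<?k}" using b1 by (simp add: bij_betw_def)
  ultimately show ?thesis by blast
qed

lemma es_weight_initial_segment_ideal:
  assumes U: "U \<subseteq> {..<l}"
  shows "perm_ideal n l (\<lambda>F. es_weight n l U F - es_weight n l {..<card U} F)"
proof -
  obtain \<sigma> where s: "\<sigma> permutes {..<l}" and img: "\<sigma> ` U = {..<card U}"
    using permutes_onto_initial_segment[OF U] by blast
  have kI: "{..<card U} \<subseteq> {..<l}" using card_mono[OF _ U] by auto
  have "perm_ideal n l (\<lambda>F. (-1) * (es_weight n l {..<card U} F - es_weight n l {..<card U} (\<lambda>Y. F (permute_tuple l \<sigma> Y))))"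
    by (rule perm_ideal_scale[OF es_weight_permute_diff_ideal[OF s kI]])
  moreover have "es_weight n l U F = es_weight n l {..<card U} (\<lambda>Y. F (permute_tuple l \<sigma> Y))" for F
    using es_weight_permute[OF s U, of n F] img by simp
  ultimately show ?thesis by simp
qed

section \<open>Counting\<close>

lemma sum_subsets_card_le:
  fixes g :: "nat \<Rightarrow> 'a::comm_semiring_1"
  assumes r: "r \<le> l"
  shows "(\<Sum>U\<in>{U\<in>Pow {..<l}. card U \<le> r}. g (card U)) = (\<Sum>j=0..r. of_nat (l choose j) * g j)"
proof -
  have "(\<Sum>U\<in>{U\<in>Pow {..<l}. card U \<le> r}. g (card U)) =
     (\<Sum>j\<in>{0..r}. \<Sum>U\<in>{U\<in>{U\<in>Pow {..<l}. card U \<le> r}. card U = j}. g (card U))"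
    by (rule sum.group[symmetric]) auto
  also have "\<dots> = (\<Sum>j=0..r. of_nat (l choose j) * g j)"
  proof (intro sum.cong refl)
    fix j assume "j \<in> {0..r}"
    then have "{U\<in>{U\<in>Pow {..<l}. card U \<le> r}. card U = j} = {U. U \<subseteq> {..<l} \<and> card U = j}"
      by auto
    moreover have "card {U. U \<subseteq> {..<l} \<and> card U = j} = l choose j"
      using n_subsets[of "{..<l}" j] by simp
    ultimately show "(\<Sum>U\<in>{U\<in>{U\<in>Pow {..<l}. card U \<le> r}. card U = j}. g (card U)) = of_nat (l choose j) * g j"
      by simp
  qed
  finally show ?thesis .
qed

lemma binomial_pred_le:
  assumes "0 < a" and "a \<le> l"
  shows "real ((a - 1) choose m) \<le> (1 - real m / real l) * real (a choose m)"
proof (cases "m \<le> a")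
  case True
  have "real a * real ((a - 1) choose m) = real (a - m) * real (a choose m)"
    using binomial_absorb_comp[of a m] by (metis of_nat_mult)
  then have "real ((a - 1) choose m) = (1 - real m / real a) * real (a choose m)"
    using assms(1) True by (simp add: field_simps of_nat_diff)
  also have "\<dots> \<le> (1 - real m / real l) * real (a choose m)"
    using assms by (intro mult_right_mono diff_left_mono divide_left_mono) auto
  finally show ?thesis .
next
  case False
  then show ?thesis
    by (simp add: binomial_eq_0)
qed

lemma binomial_diff_le_power:
  assumes "u \<le> l" and "m \<le> l"
  shows "real ((l - u) choose m) \<le> (1 - real m / real l) ^ u * real (l choose m)"
  using assms(1)
proof (induction u)
  case 0
  then show ?case by simp
next
  case (Suc u)
  have "0 \<le> 1 - real m / real l"
    using assms(2) by (cases "l = 0") (simp_all add: field_simps)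
  have "l - Suc u = (l - u) - 1"
    by simp
  then have "real ((l - Suc u) choose m) \<le> (1 - real m / real l) * real ((l - u) choose m)"
    using binomial_pred_le[of "l - u" l m] Suc.prems by simp
  also have "\<dots> \<le> (1 - real m / real l) * ((1 - real m / real l) ^ u * real (l choose m))"
    using Suc \<open>0 \<le> 1 - real m / real l\<close> by (intro mult_left_mono) simp_all
  finally show ?case
    by (simp add: mult.assoc)
qed

lemma weight_sets_eq:
  assumes "\<alpha> * real l = real m"
  shows "weight_sets \<alpha> l = {S. S \<subseteq> {..<l} \<and> card S = m}"
  unfolding weight_sets_def using assms by auto

lemma card_weight_sets:
  assumes "\<alpha> * real l = real m"
  shows "card (weight_sets \<alpha> l) = l choose m"
  unfolding weight_sets_eq[OF assms] using n_subsets[of "{..<l}" m] by simp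

lemma card_weight_sets_disjoint:
  assumes "\<alpha> * real l = real m" and U: "U \<subseteq> {..<l}"
  shows "card {S\<in>weight_sets \<alpha> l. S \<inter> U = {}} = (l - card U) choose m"
proof -
  have "{S\<in>weight_sets \<alpha> l. S \<inter> U = {}} = {S. S \<subseteq> {..<l} - U \<and> card S = m}"
    unfolding weight_sets_eq[OF assms(1)] by auto
  moreover have "card ({..<l} - U) = l - card U"
    using U by (simp add: card_Diff_subset finite_subset)
  ultimately show ?thesis
    using n_subsets[of "{..<l} - U" m] by simp
qed

lemma avoid_prob_le_1: "avoid_prob \<alpha> l U \<le> 1"
proof -
  have "card {S\<in>weight_sets \<alpha> l. S \<inter> U = {}} \<le> card (weight_sets \<alpha> l)"
    by (rule card_mono[OF finite_weight_sets]) auto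
  then show ?thesis
    unfolding avoid_prob_def by (auto simp: divide_le_eq_1)
qed

lemma avoid_prob_le_power:
  assumes am: "\<alpha> * real l = real m" and ml: "m \<le> l" and l: "0 < l"
    and U: "U \<subseteq> {..<l}" and k: "k \<le> card U"
  shows "avoid_prob \<alpha> l U \<le> (1 - \<alpha>) ^ k"
proof -
  have \<alpha>: "\<alpha> = real m / real l"
    using am l by (simp add: field_simps)
  have "card U \<le> l"
    using card_mono[OF _ U] by simp
  moreover have "avoid_prob \<alpha> l U = real ((l - card U) choose m) / real (l choose m)"
    unfolding avoid_prob_def card_weight_sets_disjoint[OF am U] card_weight_sets[OF am] ..
  ultimately have "avoid_prob \<alpha> l U \<le> (1 - \<alpha>) ^ card U"
    using binomial_diff_le_power[of "card U" l m] ml \<alpha> by (simp add: divide_le_eq)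
  also have "\<dots> \<le> (1 - \<alpha>) ^ k"
  proof (rule power_decreasing[OF k])
    show "0 \<le> 1 - \<alpha>" "1 - \<alpha> \<le> 1"
      using ml l unfolding \<alpha> by (simp_all add: divide_le_eq_1)
  qed
  finally show ?thesis .
qed

section \<open>The bound\<close>

lemma dirichlet_gap_eq:
  fixes \<alpha> :: real
  assumes n: "0 < n" and r: "r \<le> l"
  defines "b \<equiv> 1 - (1 - \<alpha>) ^ (r + 1)" and "K \<equiv> 8 ^ r * real (l choose r)"
  shows "real (card (tuples n l)) * (dirichlet n l \<alpha> F - rhs_bound n l \<alpha> r F) =
    (\<Sum>U\<in>Pow {..<l}. (1 - avoid_prob \<alpha> l U - b) * es_weight n l U F)
    + b * K * (\<Sum>j=0..r. \<Sum>U\<in>Pow {..<j}. es_weight n l U F)"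
proof -
  let ?N = "real (card (tuples n l))" and ?w = "\<lambda>U. es_weight n l U F"
  have suffix: "dot n l F (resample n l ({..<l} - {..<j}) F) = (\<Sum>U\<in>Pow {..<j}. ?w U)" if "j \<le> r" for j
  proof -
    have "dot n l F (resample n l ({..<l} - {..<j}) F) =
        (\<Sum>U\<in>{U\<in>Pow {..<l}. U \<inter> ({..<l} - {..<j}) = {}}. ?w U)"
      by (rule dot_resample_eq_sum_es_weight) (use n in auto)
    also have "{U\<in>Pow {..<l}. U \<inter> ({..<l} - {..<j}) = {}} = Pow {..<j}"
      using that r by auto (metis IntI atLeastLessThan_iff empty_iff lessThan_iff not_le subsetD)
    finally show ?thesis .
  qed
  have deltas: "(\<Sum>j=0..r. avg n j (\<lambda>Y. (delta n l F Y)\<^sup>2)) = (\<Sum>j=0..r. \<Sum>U\<in>Pow {..<j}. ?w U) / ?N"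
  proof -
    have "(\<Sum>j=0..r. avg n j (\<lambda>Y. (delta n l F Y)\<^sup>2)) = (\<Sum>j=0..r. (\<Sum>U\<in>Pow {..<j}. ?w U) / ?N)"
      by (intro sum.cong refl) (use r n suffix in \<open>simp add: avg_delta_squared\<close>)
    then show ?thesis
      by (simp add: sum_divide_distrib)
  qed
  have avgs: "avg n l F + avg n l (\<lambda>X. (F X)\<^sup>2 - F X) = dot n l F F / ?N"
    unfolding avg_def dot_def by (simp add: sum_subtractf power2_eq_square add_divide_distrib[symmetric])
  have dir: "dirichlet n l \<alpha> F = (dot n l F F - dot n l F (Cop n l \<alpha> F)) / ?N"
    unfolding dirichlet_def avg_def dot_def by (simp add: sum_subtractf algebra_simps)
  have rhs: "rhs_bound n l \<alpha> r F = b * (dot n l F F / ?N - K * ((\<Sum>j=0..r. \<Sum>U\<in>Pow {..<j}. ?w U) / ?N))"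
    unfolding rhs_bound_def b_def K_def deltas[symmetric] avgs[symmetric] by simp
  have weights: "(\<Sum>U\<in>Pow {..<l}. (1 - avoid_prob \<alpha> l U - b) * ?w U) =
      dot n l F F - dot n l F (Cop n l \<alpha> F) - b * dot n l F F"
    unfolding dot_self_eq_sum_es_weight[OF n] dot_Cop[OF n]
    by (simp add: left_diff_distrib sum_subtractf sum_distrib_left)
  have "?N \<noteq> 0"
    using n by (simp add: card_tuples)
  then show ?thesis
    unfolding dir rhs weights by (simp add: field_simps)
qed

text \<open>
  The weights of large sets keep their (nonnegative) coefficients; each weight of a small set U
  is traded for the weight of the initial segment [|U|], the difference being left to the
  symmetry axioms.
\<close>

lemma sum_weights_regroup:
  fixes a w :: "nat set \<Rightarrow> real"
  assumes r: "r \<le> l"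
  shows "(\<Sum>U\<in>Pow {..<l}. (a U - b) * w U) + b * K * (\<Sum>j=0..r. \<Sum>U\<in>Pow {..<j}. w U) =
      (\<Sum>U\<in>{U\<in>Pow {..<l}. r < card U}. (a U - b) * w U)
    + (\<Sum>U\<in>{U\<in>Pow {..<l}. card U \<le> r}. a U * w {..<card U})
    + (\<Sum>j=0..r. b * (K - real (l choose j)) * w {..<j})
    + (\<Sum>j=0..r. \<Sum>U\<in>Pow {..<j} - {{..<j}}. b * K * w U)
    + (\<Sum>U\<in>{U\<in>Pow {..<l}. card U \<le> r}. (a U - b) * (w U - w {..<card U}))"
proof -
  let ?Hi = "{U\<in>Pow {..<l}. r < card U}" and ?Lo = "{U\<in>Pow {..<l}. card U \<le> r}"
  have "Pow {..<l} = ?Hi \<union> ?Lo" "?Hi \<inter> ?Lo = {}"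
    by auto
  then have split: "(\<Sum>U\<in>Pow {..<l}. (a U - b) * w U) =
      (\<Sum>U\<in>?Hi. (a U - b) * w U) + (\<Sum>U\<in>?Lo. (a U - b) * w U)"
    by (metis (no_types, lifting) finite_Pow_iff finite_lessThan finite_Un sum.union_disjoint)
  have low: "(\<Sum>U\<in>?Lo. (a U - b) * w U) = (\<Sum>U\<in>?Lo. (a U - b) * (w U - w {..<card U}))
      + (\<Sum>U\<in>?Lo. a U * w {..<card U}) - b * (\<Sum>j=0..r. real (l choose j) * w {..<j})"
    unfolding sum_subsets_card_le[OF r, of "\<lambda>j. w {..<j}", symmetric]
    by (simp add: algebra_simps sum.distrib sum_subtractf sum_distrib_left)
  have initial: "(\<Sum>U\<in>Pow {..<j}. w U) = w {..<j} + (\<Sum>U\<in>Pow {..<j} - {{..<j}}. w U)" for j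
    by (rule sum.remove) auto
  show ?thesis
    unfolding split low initial
    by (simp add: algebra_simps sum.distrib sum_subtractf sum_distrib_left)
qed

lemma dirichlet_gap_sos2:
  assumes am: "\<alpha> * real l = real m" and ml: "m \<le> l" and l: "0 < l" and n: "0 < n" and r: "2 * r \<le> l"
  shows "sos2_proof n l (\<lambda>F. dirichlet n l \<alpha> F - rhs_bound n l \<alpha> r F)"
proof -
  have rl: "r \<le> l"
    using r by simp
  define b where "b = 1 - (1 - \<alpha>) ^ (r + 1)"
  define K where "K = 8 ^ r * real (l choose r)"
  define a where "a U = 1 - avoid_prob \<alpha> l U" for U
  let ?Hi = "{U\<in>Pow {..<l}. r < card U}" and ?Lo = "{U\<in>Pow {..<l}. card U \<le> r}"
  let ?w = "\<lambda>U F. es_weight n l U F"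
  have "\<alpha> = real m / real l"
    using am l by (simp add: field_simps)
  then have "(1 - \<alpha>) ^ (r + 1) \<le> 1"
    using ml by (intro power_le_one) (auto simp: divide_le_eq_1)
  then have b: "0 \<le> b"
    by (simp add: b_def)
  have K: "real (l choose j) \<le> K" if "j \<le> r" for j
  proof -
    have "real (l choose j) \<le> real (l choose r)"
      using binomial_mono[OF that r] by simp
    also have "\<dots> \<le> K"
      using mult_right_mono[of 1 "8 ^ r :: real" "real (l choose r)"] by (simp add: K_def)
    finally show ?thesis .
  qed
  define S where "S F = (\<Sum>U\<in>?Hi. (a U - b) * ?w U F) + (\<Sum>U\<in>?Lo. a U * ?w {..<card U} F)
    + (\<Sum>j=0..r. b * (K - real (l choose j)) * ?w {..<j} F)
    + (\<Sum>j=0..r. \<Sum>U\<in>Pow {..<j} - {{..<j}}. b * K * ?w U F)" for F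
  define J where "J F = (\<Sum>U\<in>?Lo. (a U - b) * (?w U F - ?w {..<card U} F))" for F
  have gap: "dirichlet n l \<alpha> F - rhs_bound n l \<alpha> r F =
      1 / real (card (tuples n l)) * S F + 1 / real (card (tuples n l)) * J F" for F
    using dirichlet_gap_eq[OF n rl, of \<alpha> F] n
      sum_weights_regroup[OF rl, where a = a and b = b and K = K and w = "\<lambda>U. ?w U F"]
    unfolding S_def J_def a_def b_def K_def by (simp add: card_tuples field_simps)
  have "0 \<le> a U - b" if "U \<in> ?Hi" for U
    using that avoid_prob_le_power[OF am ml l, of U "r + 1"] by (auto simp: a_def b_def)
  moreover have "0 \<le> a U" for U
    using avoid_prob_le_1 by (simp add: a_def)
  ultimately have "sos_affine n l S"
    unfolding S_def using rl b K
    by (intro sos_affine_add sos_affine_sum sos_affine_scale es_weight_sos) (auto simp: K_def)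
  moreover have "perm_ideal n l J"
    unfolding J_def by (intro perm_ideal_sum perm_ideal_scale es_weight_initial_segment_ideal) auto
  ultimately show ?thesis
    by (intro sos2_proofI[OF sos_affine_scale perm_ideal_scale gap]) simp
qed

theorem theoremC1:
  fixes \<alpha> :: real and l n r :: nat
  assumes "0 < \<alpha>" and "\<alpha> < 1"
    and "real l \<ge> 1 / \<alpha>"
    and "\<alpha> * real l \<in> \<nat>"
    and "n \<ge> l"
    and "1 \<le> r" and "2 * r \<le> l"
  shows "sos2_proof n l (\<lambda>F. dirichlet n l \<alpha> F - rhs_bound n l \<alpha> r F)
     \<and> (\<forall>F. perm_invariant n l F \<and> (\<forall>X\<in>tuples n l. 0 \<le> F X \<and> F X \<le> 1)
            \<longrightarrow> dirichlet n l \<alpha> F \<ge> rhs_bound n l \<alpha> r F)"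
proof -
  obtain m where am: "\<alpha> * real l = real m"
    using assms(4) Nats_cases by metis
  have "real m \<le> real l"
    using am mult_right_mono[of \<alpha> 1 "real l"] assms(2) by simp
  moreover have "0 < l"
    using assms(1,3) by (metis divide_pos_pos less_le_trans of_nat_0_less_iff zero_less_one)
  ultimately have cert: "sos2_proof n l (\<lambda>F. dirichlet n l \<alpha> F - rhs_bound n l \<alpha> r F)"
    using assms(5,7) by (intro dirichlet_gap_sos2[OF am]) auto
  then show ?thesis
    using sos2_proof_nonneg[OF cert] by auto
qed

end
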